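(* Let $\mathbb{F}$ be a field of characteristic zero, $d\ge 1$, $n\geq 2$, and let $\mathbf{b}=(b_1,\dots,b_n)\in\mathbb{N}_+^n$ with $b_1=1$ and $b_n>\dots>b_2\geq 2$. Let $\mathbf{c}_i=(c_{i,1},\dots,c_{i,n})\in\mathbb{F}^n$ for $i=1,\dots,d$, where $c_{1,1},\dots,c_{d,1}$ are not all zero. For $m=0,1,\dots,b_n$ let $$q_{n,m}=\sum_{\tau(\pmb\gamma_1,\dots,\pmb\gamma_d)=m}\frac{\mathbf{c}_1^{\pmb\gamma_1}\cdots\mathbf{c}_d^{\pmb\gamma_d}}{\pmb\gamma_1!\cdots\pmb\gamma_d!}x_1^{|\pmb\gamma_1|}\cdots x_d^{|\pmb\gamma_d|}\in\mathbb{F}[x_1,\dots,x_d],$$ and let $Q=\mathrm{span}\{q_{n,m}: m=0,1,\dots,b_n\}$ (a $D$-invariant subspace). Then the breadth of $Q$ is $1$.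
   Context: The sum runs over $\pmb\gamma_i=(\gamma_{i,1},\dots,\gamma_{i,n})\in\mathbb{N}^n$ ($i=1,\dots,d$), with $|\pmb\gamma_i|=\sum_j\gamma_{i,j}$, $\pmb\gamma_i!=\prod_j\gamma_{i,j}!$, $\mathbf{c}_i^{\pmb\gamma_i}=\prod_{j=1}^n c_{i,j}^{\gamma_{i,j}}$ (with the convention $0^0=1$), and $\tau(\pmb\gamma_1,\dots,\pmb\gamma_d)=\sum_{j=1}^n b_j\sum_{i=1}^d\gamma_{i,j}$. A polynomial subspace is $D$-invariant if it is closed under all partial derivatives $\partial/\partial x_j$. The breadth of a $D$-invariant polynomial subspace is the number of linear polynomials in a basis of it, maximized over bases; concretely it is the dimension of the space of degree-one homogeneous parts of the polynomials of total degree at most one in the subspace. *)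

theory Defs
  imports Complex_Main "HOL-Library.Function_Algebras"
begin

text \<open>Polynomials in the variables x_0,...,x_{d-1} over a field are represented by their
  coefficient functions: a polynomial is a map from exponent vectors
  (alpha :: nat => nat, alpha i = exponent of x_i) to coefficients.
  Indices are 0-based: variables 0..d-1, coordinates 0..n-1.\<close>

type_synonym 'a mpoly_coeffs = "(nat \<Rightarrow> nat) \<Rightarrow> 'a"

definition fscale :: "'a::field \<Rightarrow> ('b \<Rightarrow> 'a) \<Rightarrow> ('b \<Rightarrow> 'a)" where
  "fscale a f = (\<lambda>x. a * f x)"

lemma vector_space_fscale: "vector_space (fscale :: 'a::field \<Rightarrow> ('b \<Rightarrow> 'a) \<Rightarrow> _)"
  by unfold_locales (auto simp: fscale_def algebra_simps fun_eq_iff)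

definition tau :: "nat \<Rightarrow> nat \<Rightarrow> (nat \<Rightarrow> nat) \<Rightarrow> (nat \<Rightarrow> nat \<Rightarrow> nat) \<Rightarrow> nat" where
  "tau n d b \<Gamma> = (\<Sum>j<n. b j * (\<Sum>i<d. \<Gamma> i j))"

definition q_poly :: "nat \<Rightarrow> nat \<Rightarrow> (nat \<Rightarrow> nat) \<Rightarrow> (nat \<Rightarrow> nat \<Rightarrow> 'a::field_char_0)
    \<Rightarrow> nat \<Rightarrow> 'a mpoly_coeffs" where
  "q_poly n d b c m \<alpha> =
     (\<Sum>\<Gamma> \<in> {\<Gamma>. (\<forall>i j. (d \<le> i \<or> n \<le> j) \<longrightarrow> \<Gamma> i j = 0)
               \<and> (\<forall>i. d \<le> i \<longrightarrow> \<alpha> i = 0)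
               \<and> (\<forall>i<d. (\<Sum>j<n. \<Gamma> i j) = \<alpha> i)
               \<and> tau n d b \<Gamma> = m}.
        (\<Prod>i<d. \<Prod>j<n. c i j ^ \<Gamma> i j / fact (\<Gamma> i j)))"

text \<open>Q = span{q_{n,m} : m = 0..b_n}, where b_n = b (n-1) in 0-based indexing.\<close>
definition Q_space :: "nat \<Rightarrow> nat \<Rightarrow> (nat \<Rightarrow> nat) \<Rightarrow> (nat \<Rightarrow> nat \<Rightarrow> 'a::field_char_0)
    \<Rightarrow> 'a mpoly_coeffs set" where
  "Q_space n d b c =
     {p. \<exists>a :: nat \<Rightarrow> 'a. p = (\<lambda>\<alpha>. \<Sum>m\<le>b (n - 1). a m * q_poly n d b c m \<alpha>)}"

definition deg_le_one :: "nat \<Rightarrow> 'a::zero mpoly_coeffs \<Rightarrow> bool" where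
  "deg_le_one d p \<longleftrightarrow>
     (\<forall>\<alpha>. p \<alpha> \<noteq> 0 \<longrightarrow> (\<forall>i. d \<le> i \<longrightarrow> \<alpha> i = 0) \<and> (\<Sum>i<d. \<alpha> i) \<le> 1)"

definition lin_part :: "nat \<Rightarrow> 'a::zero mpoly_coeffs \<Rightarrow> (nat \<Rightarrow> 'a)" where
  "lin_part d p = (\<lambda>j. if j < d then p (\<lambda>i. if i = j then 1 else 0) else 0)"

definition breadth :: "nat \<Rightarrow> 'a::field mpoly_coeffs set \<Rightarrow> nat" where
  "breadth d P = vector_space.dim (fscale :: 'a \<Rightarrow> (nat \<Rightarrow> 'a) \<Rightarrow> _)
                   (lin_part d ` {p \<in> P. deg_le_one d p})"

end

theory Submission
  imports Defs
begin

text \<open>Since every weight is at least 1, the coefficient of x^alpha in q_{n,m} vanishes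
  unless |alpha| \<le> m; and since only the first weight equals 1, in degree |alpha| = m the
  single contributing tuple puts all its mass in the first coordinate.  So q_{n,m} has
  total degree m with top homogeneous part (c_{1,1} x_1 + ... + c_{d,1} x_d)^m / m!, which is
  nonzero.  Hence a combination of the q_{n,m} of degree at most one uses only q_{n,0} and
  q_{n,1}, and every linear part is a multiple of that of q_{n,1}, which itself is nonzero.\<close>

lemma tau_eq_degree_plus_excess:
  assumes "\<And>j. j < n \<Longrightarrow> 1 \<le> b j"
    and "\<And>i. i < d \<Longrightarrow> (\<Sum>j<n. \<Gamma> i j) = \<alpha> i"
  shows "tau n d b \<Gamma> = (\<Sum>i<d. \<alpha> i) + (\<Sum>j<n. (b j - 1) * (\<Sum>i<d. \<Gamma> i j))"
proof -
  have "(\<Sum>i<d. \<alpha> i) = (\<Sum>j<n. \<Sum>i<d. \<Gamma> i j)"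
    using assms(2) by (simp add: sum.swap[of _ "{..<d}"])
  moreover have "b j * s = s + (b j - 1) * s" if "j < n" for j s
    using assms(1)[OF that] by (simp add: diff_mult_distrib)
  ultimately show ?thesis
    unfolding tau_def by (simp add: sum.distrib[symmetric])
qed

lemma degree_le_tau:
  assumes "\<And>j. j < n \<Longrightarrow> 1 \<le> b j"
    and "\<And>i. i < d \<Longrightarrow> (\<Sum>j<n. \<Gamma> i j) = \<alpha> i"
  shows "(\<Sum>i<d. \<alpha> i) \<le> tau n d b \<Gamma>"
  using tau_eq_degree_plus_excess[OF assms] by simp

lemma tau_eq_degree_imp_vanish:
  assumes "\<And>j. j < n \<Longrightarrow> 1 \<le> b j" and "\<And>j. 1 \<le> j \<Longrightarrow> j < n \<Longrightarrow> 2 \<le> b j"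
    and "\<And>i. i < d \<Longrightarrow> (\<Sum>j<n. \<Gamma> i j) = \<alpha> i"
    and "tau n d b \<Gamma> = (\<Sum>i<d. \<alpha> i)"
    and "i < d" "1 \<le> j" "j < n"
  shows "\<Gamma> i j = 0"
proof -
  have "(\<Sum>j<n. (b j - 1) * (\<Sum>i<d. \<Gamma> i j)) = 0"
    using tau_eq_degree_plus_excess[OF assms(1,3)] assms(4) by simp
  hence "(b j - 1) * (\<Sum>i<d. \<Gamma> i j) = 0"
    using assms(7) by simp
  moreover have "\<Gamma> i j \<le> (\<Sum>i<d. \<Gamma> i j)"
    using assms(5) by (intro member_le_sum) auto
  ultimately show ?thesis
    using assms(2)[OF assms(6,7)] by simp
qed

lemma q_poly_eq_0_if_not_supported:
  assumes "\<not> (\<forall>i. d \<le> i \<longrightarrow> \<alpha> i = 0)"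
  shows "q_poly n d b c m \<alpha> = 0"
  using assms unfolding q_poly_def by (intro sum.neutral) auto

lemma q_poly_mem_Q_space:
  assumes "m \<le> b (n - 1)"
  shows "q_poly n d b c m \<in> Q_space n d b c"
proof -
  have "{..b (n - 1)} \<inter> {k. k = m} = {m}"
    using assms by auto
  hence "q_poly n d b c m = (\<lambda>\<alpha>. \<Sum>k\<le>b (n - 1). of_bool (k = m) * q_poly n d b c k \<alpha>)"
    by simp
  thus ?thesis
    unfolding Q_space_def by (intro CollectI exI)
qed

definition single_exp :: "nat \<Rightarrow> nat \<Rightarrow> nat \<Rightarrow> nat" where
  "single_exp i k = (\<lambda>l. if l = i then k else 0)"

lemma sum_single_exp: "i < d \<Longrightarrow> (\<Sum>l<d. single_exp i k l) = k"
  by (simp add: single_exp_def)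

locale admissible_weights =
  fixes n :: nat and b :: "nat \<Rightarrow> nat"
  assumes n_pos: "0 < n"
    and b_0: "b 0 = 1"
    and b_ge_2: "\<And>j. 1 \<le> j \<Longrightarrow> j < n \<Longrightarrow> 2 \<le> b j"
begin

lemma b_pos: "j < n \<Longrightarrow> 1 \<le> b j"
  using b_0 b_ge_2[of j] by (cases j) auto

lemma q_poly_eq_0_if_degree_gt:
  assumes "m < (\<Sum>i<d. \<alpha> i)"
  shows "q_poly n d b c m \<alpha> = 0"
proof -
  have "tau n d b \<Gamma> \<noteq> m" if "\<And>i. i < d \<Longrightarrow> (\<Sum>j<n. \<Gamma> i j) = \<alpha> i" for \<Gamma>
  proof -
    have "(\<Sum>i<d. \<alpha> i) \<le> tau n d b \<Gamma>"
      by (rule degree_le_tau) (use b_pos that in auto)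
    thus ?thesis
      using assms by simp
  qed
  thus ?thesis
    unfolding q_poly_def by (intro sum.neutral) auto
qed

lemma tau_first_column: "tau n d b (\<lambda>i j. if i < d \<and> j = 0 then \<alpha> i else 0) = (\<Sum>i<d. \<alpha> i)"
proof -
  have "b j * (\<Sum>i<d. if i < d \<and> j = 0 then \<alpha> i else 0) = (if j = 0 then \<Sum>i<d. \<alpha> i else 0)" for j
    using b_0 by simp
  thus ?thesis
    using n_pos unfolding tau_def by simp
qed

lemma top_degree_tuple_unique:
  assumes "\<forall>i j. d \<le> i \<or> n \<le> j \<longrightarrow> \<Gamma> i j = 0"
    and "\<And>i. i < d \<Longrightarrow> (\<Sum>j<n. \<Gamma> i j) = \<alpha> i"
    and "tau n d b \<Gamma> = (\<Sum>i<d. \<alpha> i)"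
  shows "\<Gamma> = (\<lambda>i j. if i < d \<and> j = 0 then \<alpha> i else 0)"
proof -
  have off_first: "\<Gamma> i j = 0" if "\<not> (i < d \<and> j = 0)" for i j
    using assms(1) tau_eq_degree_imp_vanish[OF b_pos b_ge_2 assms(2,3)] that
    by (cases "d \<le> i \<or> n \<le> j") auto
  show ?thesis
  proof (intro ext)
    fix i j
    show "\<Gamma> i j = (if i < d \<and> j = 0 then \<alpha> i else 0)"
    proof (cases "i < d \<and> j = 0")
      case True
      have "(\<Sum>j<n. \<Gamma> i j) = \<Gamma> i 0"
        using n_pos off_first True by (subst sum.remove[of _ 0]) auto
      thus ?thesis
        using assms(2) True by simp
    qed (use off_first in auto)
  qed
qed

lemma q_poly_top_degree:
  assumes "\<forall>i. d \<le> i \<longrightarrow> \<alpha> i = 0" and "(\<Sum>i<d. \<alpha> i) = m"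
  shows "q_poly n d b c m \<alpha> = (\<Prod>i<d. c i 0 ^ \<alpha> i / fact (\<alpha> i))"
proof -
  define \<Gamma>\<^sub>0 :: "nat \<Rightarrow> nat \<Rightarrow> nat" where "\<Gamma>\<^sub>0 = (\<lambda>i j. if i < d \<and> j = 0 then \<alpha> i else 0)"
  have "{\<Gamma>. (\<forall>i j. d \<le> i \<or> n \<le> j \<longrightarrow> \<Gamma> i j = 0) \<and> (\<forall>i. d \<le> i \<longrightarrow> \<alpha> i = 0)
            \<and> (\<forall>i<d. (\<Sum>j<n. \<Gamma> i j) = \<alpha> i) \<and> tau n d b \<Gamma> = m} = {\<Gamma>\<^sub>0}"
    using assms n_pos top_degree_tuple_unique[of d _ \<alpha>] tau_first_column[of d \<alpha>]
    unfolding \<Gamma>\<^sub>0_def by auto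
  hence "q_poly n d b c m \<alpha> = (\<Prod>i<d. \<Prod>j<n. c i j ^ \<Gamma>\<^sub>0 i j / fact (\<Gamma>\<^sub>0 i j))"
    unfolding q_poly_def by simp
  also have "\<dots> = (\<Prod>i<d. \<Prod>j<n. if j = 0 then c i 0 ^ \<alpha> i / fact (\<alpha> i) else 1)"
    by (intro prod.cong refl) (auto simp: \<Gamma>\<^sub>0_def)
  also have "\<dots> = (\<Prod>i<d. c i 0 ^ \<alpha> i / fact (\<alpha> i))"
    using n_pos by (simp add: prod.delta)
  finally show ?thesis .
qed

lemma q_poly_single_exp:
  assumes "i < d"
  shows "q_poly n d b c k (single_exp i k) = c i 0 ^ k / fact k"
proof -
  have "q_poly n d b c k (single_exp i k) = (\<Prod>l<d. c l 0 ^ single_exp i k l / fact (single_exp i k l))"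
    using assms by (intro q_poly_top_degree) (auto simp: single_exp_def)
  also have "\<dots> = (\<Prod>l<d. if l = i then c i 0 ^ k / fact k else 1)"
    by (intro prod.cong refl) (auto simp: single_exp_def)
  also have "\<dots> = c i 0 ^ k / fact k"
    using assms by (simp add: prod.delta)
  finally show ?thesis .
qed

lemma deg_le_one_q_poly_1: "deg_le_one d (q_poly n d b c 1)"
  unfolding deg_le_one_def
proof (intro allI impI)
  fix \<alpha> assume nonzero: "q_poly n d b c 1 \<alpha> \<noteq> 0"
  show "(\<forall>i. d \<le> i \<longrightarrow> \<alpha> i = 0) \<and> (\<Sum>i<d. \<alpha> i) \<le> 1"
  proof
    show "\<forall>i. d \<le> i \<longrightarrow> \<alpha> i = 0"
      using nonzero q_poly_eq_0_if_not_supported[of d \<alpha> n b c 1] by blast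
    show "(\<Sum>i<d. \<alpha> i) \<le> 1"
      using nonzero q_poly_eq_0_if_degree_gt[of 1 \<alpha> d c] by linarith
  qed
qed

lemma lin_part_q_poly_1: "lin_part d (q_poly n d b c 1) = (\<lambda>j. if j < d then c j 0 else 0)"
proof
  fix j
  have "(\<lambda>i. if i = j then 1 else 0) = single_exp j (1::nat)"
    by (simp add: single_exp_def fun_eq_iff)
  thus "lin_part d (q_poly n d b c 1) j = (if j < d then c j 0 else 0)"
    using q_poly_single_exp[of j d c 1] unfolding lin_part_def by simp
qed

lemma combination_at_single_exp:
  assumes "i < d" and "M \<le> B" and "\<And>k. M < k \<Longrightarrow> k \<le> B \<Longrightarrow> a k = 0"
  shows "(\<Sum>k\<le>B. a k * q_poly n d b c k (single_exp i M)) = a M * (c i 0 ^ M / fact M)"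
proof -
  have "a k * q_poly n d b c k (single_exp i M) = (if k = M then a M * (c i 0 ^ M / fact M) else 0)"
    if "k \<le> B" for k
  proof (cases k M rule: linorder_cases)
    case less
    thus ?thesis
      using q_poly_eq_0_if_degree_gt[where m = k and \<alpha> = "single_exp i M" and c = c]
        sum_single_exp[OF assms(1)]
      by simp
  next
    case equal
    thus ?thesis
      using q_poly_single_exp[OF assms(1), of c M] by simp
  qed (use assms that in auto)
  hence "(\<Sum>k\<le>B. a k * q_poly n d b c k (single_exp i M))
      = (\<Sum>k\<le>B. if k = M then a M * (c i 0 ^ M / fact M) else 0)"
    by (intro sum.cong) auto
  also have "\<dots> = a M * (c i 0 ^ M / fact M)"
    using assms(2) by (simp only: sum.delta finite_atMost) simp
  finally show ?thesis .
qed

lemma deg_le_one_combination_coeff_eq_0: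
  assumes "i < d" and "c i 0 \<noteq> 0"
    and "deg_le_one d (\<lambda>\<alpha>. \<Sum>k\<le>B. a k * q_poly n d b c k \<alpha>)"
    and "2 \<le> m" and "m \<le> B"
  shows "a m = 0"
proof (rule ccontr)
  assume "a m \<noteq> 0"
  define S where "S = {k. 2 \<le> k \<and> k \<le> B \<and> a k \<noteq> 0}"
  define M where "M = Max S"
  have "finite S" and "m \<in> S"
    using \<open>a m \<noteq> 0\<close> assms(4,5) unfolding S_def by auto
  hence "M \<in> S" and M_max: "\<And>k. k \<in> S \<Longrightarrow> k \<le> M"
    unfolding M_def using Max_in Max_ge by auto
  have "a k = 0" if "M < k" and "k \<le> B" for k
    using M_max[of k] \<open>M \<in> S\<close> that unfolding S_def by auto
  hence "(\<Sum>k\<le>B. a k * q_poly n d b c k (single_exp i M)) = a M * (c i 0 ^ M / fact M)"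
    using assms(1) \<open>M \<in> S\<close> unfolding S_def by (intro combination_at_single_exp) auto
  also have "\<dots> \<noteq> 0"
    using \<open>M \<in> S\<close> assms(2) unfolding S_def by simp
  finally have "(\<Sum>l<d. single_exp i M l) \<le> 1"
    using assms(3)[unfolded deg_le_one_def, rule_format, of "single_exp i M"] by simp
  thus False
    using \<open>M \<in> S\<close> sum_single_exp[OF assms(1)] unfolding S_def by simp
qed

lemma lin_part_Q_space_deg_le_one:
  assumes "i < d" and "c i 0 \<noteq> 0"
    and "p \<in> Q_space n d b c" and "deg_le_one d p"
  shows "lin_part d p \<in> range (\<lambda>t. fscale t (lin_part d (q_poly n d b c 1)))"
proof -
  define B where "B = b (n - 1)"
  obtain a where p: "p = (\<lambda>\<alpha>. \<Sum>k\<le>B. a k * q_poly n d b c k \<alpha>)"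
    using assms(3) unfolding Q_space_def B_def by auto
  have "1 \<le> B"
    using b_pos n_pos unfolding B_def by simp
  have "lin_part d p j = a 1 * c j 0" if "j < d" for j
  proof -
    have "lin_part d p j = (\<Sum>k\<le>B. a k * q_poly n d b c k (single_exp j 1))"
      using that unfolding p lin_part_def single_exp_def by simp
    also have "\<dots> = a 1 * (c j 0 ^ 1 / fact 1)"
      using \<open>1 \<le> B\<close> assms(1,2,4) that unfolding p
      by (intro combination_at_single_exp deg_le_one_combination_coeff_eq_0) auto
    finally show ?thesis
      by simp
  qed
  hence "lin_part d p = fscale (a 1) (lin_part d (q_poly n d b c 1))"
    unfolding lin_part_q_poly_1 fscale_def by (auto simp: lin_part_def)
  thus ?thesis
    by blast
qed

end

lemma (in vector_space) dim_eq_1_if_subset_span_singleton: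
  assumes "v \<in> S" and "v \<noteq> 0" and "S \<subseteq> span {v}"
  shows "dim S = 1"
  by (rule dim_unique[of "{v}"]) (use assms independent_insertI[of v "{}"] in auto)

theorem lemma3:
  fixes n d :: nat and b :: "nat \<Rightarrow> nat" and c :: "nat \<Rightarrow> nat \<Rightarrow> 'a::field_char_0"
  assumes "d \<ge> 1" and "n \<ge> 2"
    and "\<forall>j<n. b j > 0"
    and "b 0 = 1" and "b 1 \<ge> 2"
    and "\<forall>j k. 1 \<le> j \<longrightarrow> j < k \<longrightarrow> k < n \<longrightarrow> b j < b k"
    and "\<exists>i<d. c i 0 \<noteq> 0"
  shows "breadth d (Q_space n d b c) = 1"
proof -
  interpret V: vector_space "fscale :: 'a \<Rightarrow> (nat \<Rightarrow> 'a) \<Rightarrow> _"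
    by (rule vector_space_fscale)
  interpret admissible_weights n b
  proof
    show "0 < n" and "b 0 = 1"
      using assms(2,4) by simp_all
    show "2 \<le> b j" if "1 \<le> j" and "j < n" for j
      using assms(5) assms(6)[rule_format, of 1 j] that by (cases "j = 1") auto
  qed
  obtain i where i: "i < d" "c i 0 \<noteq> 0"
    using assms(7) by blast
  define v where "v = lin_part d (q_poly n d b c 1)"
  let ?L = "lin_part d ` {p \<in> Q_space n d b c. deg_le_one d p}"
  have "v \<in> ?L"
    using q_poly_mem_Q_space[of 1 b n d c] b_pos[of "n - 1"] n_pos deg_le_one_q_poly_1
    unfolding v_def by auto
  moreover have "v \<noteq> 0"
    using i unfolding v_def lin_part_q_poly_1 by (auto simp: fun_eq_iff)
  moreover have "?L \<subseteq> V.span {v}"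
    using i lin_part_Q_space_deg_le_one[of i d c] unfolding v_def V.span_singleton by blast
  ultimately show ?thesis
    unfolding breadth_def by (rule V.dim_eq_1_if_subset_span_singleton)
qed

end
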